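(* (i) For every positive integer $k$, the sets $\{0,1,\dots,k-1\}$ and $k+\{0,k,2k,\dots,(k-1)k\}=\{k,2k,\dots,k^2\}$, viewed in $\mathbb{Z}_{k^2+1}$, form a (classical) $(k^2+1,2,k,1)$-SEDF in $\mathbb{Z}_{k^2+1}$. (ii) Let $v,k$ be positive integers with $k\mid v$, $v\mid k^2$ and $\lambda=k^2/v>1$, and in $\mathbb{Z}_{v+1}$ let $A_{X'}=\{0,1,\dots,k-1\}$ and $A_{Y'}=\{ak,ak+1,\dots,ak+\lambda-1: a=0,\dots,\tfrac{v}{k}-1\}$. Then there are no $s,t\in\mathbb{Z}_{v+1}$ and no $\mu$ such that $\{s+A_{X'}, t+A_{Y'}\}$ is a classical $(v+1,2,k,\mu)$-SEDF in $\mathbb{Z}_{v+1}$.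
   Context: For subsets $A,B$ of an additive group $G$, $\Delta(A,B)$ is the multiset $\{a-b:a\in A,b\in B\}$, and $s+A=\{s+a: a\in A\}$. For a group $G$ of order $v$ and $m>1$, a family of pairwise disjoint $k$-subsets $\{A_1,\dots,A_m\}$ of $G$ is a classical $(v,m,k,\lambda)$-SEDF if for each $i$ the multiset union $\bigcup_{j\neq i}\Delta(A_i,A_j)$ contains each non-identity element of $G$ exactly $\lambda$ times and does not contain $0$. (The sets $\{0,\dots,k-1\}$ and $\{0,k,\dots,(k-1)k\}$ form a non-disjoint $(k^2,2,k,1)$-SEDF in $\mathbb{Z}_{k^2}$; part (i) says a translation converts them into a classical SEDF in $\mathbb{Z}_{k^2+1}$, and part (ii) that no such conversion is possible when $\lambda>1$.) *)

theory Defs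
  imports Main "HOL-Library.Multiset"
begin

text \<open>The cyclic group Z_n is modelled by the residues {0..<n} (as integers) with
  addition and subtraction taken mod n.\<close>

definition Zn :: "nat \<Rightarrow> int set" where
  "Zn n = {0..<int n}"

definition Delta :: "nat \<Rightarrow> int set \<Rightarrow> int set \<Rightarrow> int multiset" where
  "Delta n A B = image_mset (\<lambda>(a, b). (a - b) mod int n) (mset_set (A \<times> B))"

definition translate :: "nat \<Rightarrow> int \<Rightarrow> int set \<Rightarrow> int set" where
  "translate n s A = (\<lambda>a. (s + a) mod int n) ` A"

definition SEDF :: "nat \<Rightarrow> nat \<Rightarrow> nat \<Rightarrow> nat \<Rightarrow> (nat \<Rightarrow> int set) \<Rightarrow> bool" where
  "SEDF v m k lam A \<longleftrightarrow>
     m > 1 \<and>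
     (\<forall>i<m. A i \<subseteq> Zn v \<and> card (A i) = k) \<and>
     (\<forall>i<m. \<forall>j<m. i \<noteq> j \<longrightarrow> A i \<inter> A j = {}) \<and>
     (\<forall>i<m. let D = (\<Sum>j\<in>{j. j < m \<and> j \<noteq> i}. Delta v (A i) (A j)) in
        count D 0 = 0 \<and> (\<forall>x\<in>Zn v. x \<noteq> 0 \<longrightarrow> count D x = lam))"

end

theory Submission
  imports Defs
begin

text \<open>
  (i) Every \<open>d \<in> {1..k\<^sup>2}\<close> is uniquely \<open>m k - x\<close> with \<open>1 \<le> m \<le> k\<close> and \<open>0 \<le> x < k\<close>.
  Hence the differences of \<open>{k, 2k, \<dots>, k\<^sup>2}\<close> and \<open>{0, \<dots>, k - 1}\<close> run through the nonzero
  residues modulo \<open>k\<^sup>2 + 1\<close> exactly once, and so do the reversed differences, being their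
  negatives.

  (ii) The integer differences \<open>x - y\<close> with \<open>x \<in> {0, \<dots>, k - 1}\<close> and \<open>y\<close> in the blocks
  \<open>{a k, \<dots>, a k + \<lambda> - 1}\<close> fill the interval \<open>[k - v - \<lambda> + 1, k - 1]\<close>, which contains
  \<open>v + 1\<close> consecutive integers as \<open>\<lambda> \<ge> 2\<close>. So they meet every residue modulo \<open>v + 1\<close>:
  any two translates of the two sets intersect, whereas the sets of an SEDF are disjoint.
\<close>

lemma int_less_mult_imp_div_less:
  fixes a b c :: int
  assumes "a < c * b" "0 < b"
  shows "a div b < c"
proof -
  have "a div b * b = a - a mod b" by (simp add: minus_mod_eq_div_mult)
  also have "\<dots> < c * b" using assms pos_mod_sign[of b a] by linarith
  finally show ?thesis using assms(2) by (simp add: mult_less_cancel_right)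
qed

lemma finite_Zn [simp]: "finite (Zn n)"
  by (simp add: Zn_def)

lemma Delta_eq_mset_set:
  assumes "bij_betw (\<lambda>(a, b). (a - b) mod int n) (A \<times> B) D"
  shows "Delta n A B = mset_set D"
  using assms unfolding Delta_def bij_betw_def by (simp add: image_mset_mset_set)

lemma Delta_swap:
  "Delta n B A = image_mset (\<lambda>d. (- d) mod int n) (Delta n A B)"
proof -
  have "mset_set (B \<times> A) = image_mset prod.swap (mset_set (A \<times> B))"
    by (simp add: image_mset_mset_set product_swap)
  then show ?thesis
    unfolding Delta_def by (simp add: multiset.map_comp comp_def case_prod_beta mod_minus_eq)
qed

lemma bij_betw_neg_mod: "bij_betw (\<lambda>d. (- d) mod int n) (Zn n - {0}) (Zn n - {0})"
  by (rule bij_betw_byWitness[where f' = "\<lambda>d. (- d) mod int n"])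
    (auto simp: Zn_def mod_minus_eq zmod_zminus1_eq_if)

lemma Delta_nonzero_residues_swap:
  assumes "Delta n A B = mset_set (Zn n - {0})"
  shows "Delta n B A = mset_set (Zn n - {0})"
  using Delta_swap[of n B A] image_mset_mset_set[OF bij_betw_imp_inj_on[OF bij_betw_neg_mod]]
    bij_betw_imp_surj_on[OF bij_betw_neg_mod] assms
  by simp

lemma SEDF_pair_iff:
  "SEDF v 2 k lam (\<lambda>i. if i = 0 then X else Y) \<longleftrightarrow>
     X \<subseteq> Zn v \<and> Y \<subseteq> Zn v \<and> card X = k \<and> card Y = k \<and> X \<inter> Y = {} \<and>
     count (Delta v X Y) 0 = 0 \<and> (\<forall>x\<in>Zn v - {0}. count (Delta v X Y) x = lam) \<and>
     count (Delta v Y X) 0 = 0 \<and> (\<forall>x\<in>Zn v - {0}. count (Delta v Y X) x = lam)"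
proof -
  have "{j. j < 2 \<and> j \<noteq> 0} = {1::nat}" "{j. j < 2 \<and> j \<noteq> 1} = {0::nat}"
    by auto
  then show ?thesis
    unfolding SEDF_def by (simp add: less_2_cases_iff Let_def all_conj_distrib) blast
qed

lemma bij_betw_multiple_minus_residue:
  fixes K :: int
  assumes "K \<ge> 1"
  shows "bij_betw (\<lambda>(y, x). y - x) ((\<lambda>m. m * K) ` {1..K} \<times> {0..<K}) {1..K * K}"
  \<comment> \<open>the inverse reads \<open>m\<close> and \<open>x\<close> off \<open>d - 1 = (m - 1) K + (K - 1 - x)\<close>\<close>
proof (rule bij_betw_byWitness[where f' = "\<lambda>d. (((d - 1) div K + 1) * K, K - 1 - (d - 1) mod K)"])
  have "(m * K - x - 1) div K = m - 1" "(m * K - x - 1) mod K = K - 1 - x"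
    if "0 \<le> x" "x < K" for m x
  proof -
    have "m * K - x - 1 = (K - 1 - x) + (m - 1) * K" by (simp add: algebra_simps)
    moreover have "0 \<le> K - 1 - x" "K - 1 - x < K" using that by auto
    ultimately show "(m * K - x - 1) div K = m - 1" "(m * K - x - 1) mod K = K - 1 - x"
      using assms by (simp_all only: div_mult_self1 mod_mult_self1)
        (simp_all add: div_pos_pos_trivial mod_pos_pos_trivial)
  qed
  then show "\<forall>p\<in>(\<lambda>m. m * K) ` {1..K} \<times> {0..<K}.
      (\<lambda>d. (((d - 1) div K + 1) * K, K - 1 - (d - 1) mod K)) ((\<lambda>(y, x). y - x) p) = p"
    by auto
  show "\<forall>d\<in>{1..K * K}. (\<lambda>(y, x). y - x) (((d - 1) div K + 1) * K, K - 1 - (d - 1) mod K) = d"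
    by (auto simp: algebra_simps)
  show "(\<lambda>(y, x). y - x) ` ((\<lambda>m. m * K) ` {1..K} \<times> {0..<K}) \<subseteq> {1..K * K}"
  proof (rule image_subsetI)
    fix p assume "p \<in> (\<lambda>m. m * K) ` {1..K} \<times> {0..<K}"
    then obtain m x where p: "p = (m * K, x)" and "1 \<le> m" "m \<le> K" "0 \<le> x" "x < K"
      by auto
    moreover have "1 * K \<le> m * K" "m * K \<le> K * K"
      using \<open>1 \<le> m\<close> \<open>m \<le> K\<close> assms by (auto intro: mult_right_mono)
    ultimately have "1 \<le> m * K - x" "m * K - x \<le> K * K" by linarith+
    then show "(\<lambda>(y, x). y - x) p \<in> {1..K * K}" by (simp add: p)
  qed
  show "(\<lambda>d. (((d - 1) div K + 1) * K, K - 1 - (d - 1) mod K)) ` {1..K * K}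
      \<subseteq> (\<lambda>m. m * K) ` {1..K} \<times> {0..<K}"
  proof (rule image_subsetI)
    fix d assume "d \<in> {1..K * K}"
    then have "0 \<le> (d - 1) div K" "(d - 1) div K < K"
      using assms by (simp_all add: pos_imp_zdiv_nonneg_iff int_less_mult_imp_div_less)
    then have "((d - 1) div K + 1) * K \<in> (\<lambda>m. m * K) ` {1..K}" by simp
    moreover have "0 \<le> (d - 1) mod K" "(d - 1) mod K < K" using assms by simp_all
    then have "K - 1 - (d - 1) mod K \<in> {0..<K}" by simp
    ultimately show "(((d - 1) div K + 1) * K, K - 1 - (d - 1) mod K)
        \<in> (\<lambda>m. m * K) ` {1..K} \<times> {0..<K}"
      by blast
  qed
qed

lemma translate_multiples:
  "translate (k\<^sup>2 + 1) (int k) {int (j * k) | j. j < k} = (\<lambda>m. m * int k) ` {1..int k}"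
proof -
  have mod_trivial: "(int k + j * int k) mod int (k\<^sup>2 + 1) = (j + 1) * int k"
    if "j \<in> {0..<int k}" for j
  proof -
    have "(j + 1) * int k \<le> int k * int k" using that by (simp add: mult_right_mono)
    then have "(j + 1) * int k < int (k\<^sup>2 + 1)" by (simp add: power2_eq_square)
    then show ?thesis using that by (simp add: algebra_simps mod_pos_pos_trivial)
  qed
  have "{int (j * k) | j. j < k} = (\<lambda>j. j * int k) ` int ` {0..<k}" by auto
  then have "translate (k\<^sup>2 + 1) (int k) {int (j * k) | j. j < k}
      = (\<lambda>j. (int k + j * int k) mod int (k\<^sup>2 + 1)) ` {0..<int k}"
    by (simp add: translate_def image_int_atLeastLessThan image_image)
  also have "\<dots> = (\<lambda>j. (j + 1) * int k) ` {0..<int k}"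
    using mod_trivial by (rule image_cong[OF refl])
  also have "\<dots> = (\<lambda>m. m * int k) ` (\<lambda>j. j + 1) ` {0..<int k}"
    by (simp only: image_image)
  also have "(\<lambda>j. j + 1) ` {0..<int k} = {1..int k}"
    by force
  finally show ?thesis .
qed

lemma SEDF_consecutive_and_multiples:
  assumes "k \<ge> 1"
  shows "SEDF (k\<^sup>2 + 1) 2 k 1
    (\<lambda>i. if i = 0 then {0..<int k} else translate (k\<^sup>2 + 1) (int k) {int (j * k) | j. j < k})"
proof -
  define N where "N = k\<^sup>2 + 1"
  define K where "K = int k"
  define Y where "Y = (\<lambda>m. m * K) ` {1..K}"
  have K: "K \<ge> 1" using assms by (simp add: K_def)
  have Zn_N: "Zn N = {0..K * K}"
    by (auto simp: Zn_def N_def K_def power2_eq_square)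
  have nonzero: "Zn N - {0} = {1..K * K}" unfolding Zn_N by auto
  have bij: "bij_betw (\<lambda>(y, x). y - x) (Y \<times> {0..<K}) (Zn N - {0})"
    unfolding Y_def nonzero using K by (rule bij_betw_multiple_minus_residue)
  have "bij_betw (\<lambda>(y, x). (y - x) mod int N) (Y \<times> {0..<K}) (Zn N - {0})"
  proof (rule bij_betw_cong[THEN iffD1, OF _ bij])
    show "(\<lambda>(y, x). y - x) p = (\<lambda>(y, x). (y - x) mod int N) p" if "p \<in> Y \<times> {0..<K}" for p
      using bij_betw_apply[OF bij that] by (auto simp: Zn_def split: prod.splits)
  qed
  then have Delta_YX: "Delta N Y {0..<K} = mset_set (Zn N - {0})"
    by (rule Delta_eq_mset_set)
  have "K \<le> K * K" using K by (simp add: mult_right_mono)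
  then have X_sub: "{0..<K} \<subseteq> Zn N" unfolding Zn_N by (simp add: subset_iff)
  have "Y \<subseteq> {K..K * K}"
    using K by (auto simp: Y_def intro: mult_right_mono)
  then have Y_sub: "Y \<subseteq> Zn N" and disjoint: "{0..<K} \<inter> Y = {}"
    unfolding Zn_N using K by auto
  have card_Y: "card Y = k"
    unfolding Y_def using K by (simp add: card_image inj_on_def K_def)
  have "SEDF N 2 k 1 (\<lambda>i. if i = 0 then {0..<K} else Y)"
    unfolding SEDF_pair_iff
    using X_sub Y_sub disjoint card_Y Delta_YX Delta_nonzero_residues_swap[OF Delta_YX]
    by (simp add: K_def)
  then show ?thesis
    unfolding N_def K_def Y_def translate_multiples .
qed

lemma translates_intersect_if_differences_cover:
  fixes X Y :: "int set"
  assumes "n > 0" and "{c..<c + int n} \<subseteq> {x - y | x y. x \<in> X \<and> y \<in> Y}"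
  shows "translate n s X \<inter> translate n t Y \<noteq> {}"
proof -
  define d where "d = c + (t - s - c) mod int n"
  have "d \<in> {c..<c + int n}" using assms(1) by (simp add: d_def)
  then obtain x y where "x \<in> X" "y \<in> Y" "d = x - y" using assms(2) by blast
  have "s + x - (t + y) = (t - s - c) mod int n - (t - s - c)"
    using \<open>d = x - y\<close> unfolding d_def by linarith
  moreover have "int n dvd (t - s - c) mod int n - (t - s - c)"
    by (simp add: mod_eq_dvd_iff[symmetric])
  ultimately have "(s + x) mod int n = (t + y) mod int n"
    by (simp only: mod_eq_dvd_iff)
  then show ?thesis
    unfolding translate_def using \<open>x \<in> X\<close> \<open>y \<in> Y\<close> by blast
qed

lemma interval_subset_differences_of_blocks:
  fixes k w lam :: nat
  assumes "k \<ge> 1" "w \<ge> 1" "lam \<ge> 2"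
  shows "{int k - 1 - int (w * k)..<int k}
    \<subseteq> {x - y | x y. x \<in> {0..<int k} \<and> y \<in> {int (a * k + b) | a b. a < w \<and> b < lam}}"
proof
  fix d assume "d \<in> {int k - 1 - int (w * k)..<int k}"
  then have e: "0 \<le> int k - 1 - d" "int k - 1 - d \<le> int w * int k" by auto
  consider "int k - 1 - d < int w * int k" | "int k - 1 - d = int w * int k"
    using e by linarith
  then obtain x a b where "x \<in> {0..<int k}" "a < w" "b < lam" "d = x - int (a * k + b)"
  proof cases
    case 1
    define q where "q = (int k - 1 - d) div int k"
    define r where "r = (int k - 1 - d) mod int k"
    have "int k - 1 - d = q * int k + r" "0 \<le> r" "r < int k"
      using assms(1) by (simp_all add: q_def r_def)
    moreover have "0 \<le> q" "q < int w"
      using e 1 assms(1) by (simp_all add: q_def pos_imp_zdiv_nonneg_iff int_less_mult_imp_div_less)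
    ultimately show ?thesis
      using assms(3) by (intro that[of "int k - 1 - r" "nat q" 0]) (auto simp: algebra_simps)
  next
    case 2
    \<comment> \<open>the only place where \<open>lam \<ge> 2\<close> is needed\<close>
    then show ?thesis
      using assms by (intro that[of 0 "w - 1" 1]) (auto simp: of_nat_diff algebra_simps)
  qed
  then show "d \<in> {x - y | x y. x \<in> {0..<int k} \<and> y \<in> {int (a * k + b) | a b. a < w \<and> b < lam}}"
    by blast
qed

lemma not_SEDF_consecutive_and_blocks:
  fixes k w lam :: nat
  assumes "v = w * k" "k \<ge> 1" "w \<ge> 1" "lam \<ge> 2"
  shows "\<not> SEDF (v + 1) 2 k \<mu> (\<lambda>i. if i = 0 then translate (v + 1) s {0..<int k}
    else translate (v + 1) t {int (a * k + b) | a b. a < w \<and> b < lam})"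
proof
  assume "SEDF (v + 1) 2 k \<mu> (\<lambda>i. if i = 0 then translate (v + 1) s {0..<int k}
    else translate (v + 1) t {int (a * k + b) | a b. a < w \<and> b < lam})"
  then have "translate (v + 1) s {0..<int k}
      \<inter> translate (v + 1) t {int (a * k + b) | a b. a < w \<and> b < lam} = {}"
    by (simp add: SEDF_pair_iff)
  moreover have "translate (v + 1) s {0..<int k}
      \<inter> translate (v + 1) t {int (a * k + b) | a b. a < w \<and> b < lam} \<noteq> {}"
    using interval_subset_differences_of_blocks[OF assms(2-4)]
      translates_intersect_if_differences_cover[where n = "v + 1" and c = "int k - 1 - int v"]
    by (simp add: assms(1))
  ultimately show False by contradiction
qed

theorem theorem4p2:
  shows "(\<forall>k::nat. k \<ge> 1 \<longrightarrow>
           SEDF (k^2 + 1) 2 k 1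
             (\<lambda>i. if i = 0 then {0..<int k}
                  else translate (k^2 + 1) (int k) {int (j * k) | j. j < k}))
       \<and> (\<forall>v k :: nat. v \<ge> 1 \<and> k \<ge> 1 \<and> k dvd v \<and> v dvd k^2 \<and> k^2 div v > 1 \<longrightarrow>
           (let lam = k^2 div v;
                AX = {0..<int k};
                AY = {int (a * k + b) | a b. a < v div k \<and> b < lam}
            in \<not> (\<exists>s\<in>Zn (v + 1). \<exists>t\<in>Zn (v + 1). \<exists>\<mu>.
                     SEDF (v + 1) 2 k \<mu>
                       (\<lambda>i. if i = 0 then translate (v + 1) s AX
                            else translate (v + 1) t AY))))"
proof (intro conjI allI impI, goal_cases)
  case (1 k)
  then show ?case by (rule SEDF_consecutive_and_multiples)
next
  case (2 v k)
  then have "v = v div k * k" "k \<ge> 1" "v div k \<ge> 1" "k^2 div v \<ge> 2"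
    by (auto simp: dvd_imp_le)
  then show ?case
    unfolding Let_def using not_SEDF_consecutive_and_blocks by blast
qed

end
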